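(* Let $m\ge 1$ and let $s_1,\dots,s_{2m}$ be positive integers (an instance of \textsc{Exact Partition}). Put $S=\sum_{i=1}^{2m}s_i$, $s_{\max}=\max_i s_i$, $M=S+1$, $d_i=s_{\max}-s_i$ for $i=1,\dots,2m$, and $\epsilon=\frac{1}{2M}$. Let $$P_R=\Big\{x\in\mathbb{R}^{2m}:\ 0\le x_i\le 1\ (i=1,\dots,2m),\ \sum_{i=1}^{2m}(M+s_i)x_i\le \tfrac12 S+mM+\epsilon,\ \sum_{i=1}^{2m}(M+d_i)x_i\le \tfrac12\sum_{i=1}^{2m}d_i+mM+\epsilon\Big\}.$$ If there is no $i\in\{1,\dots,2m\}$ with $s_i=\frac{s_{\max}}{2}$, then $P_R$ is a simple polytope, i.e. at every vertex of $P_R$ exactly $2m$ of its $4m+2$ defining inequalities are active.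
   Context: The polytope $P_R$ is the linear programming relaxation of the Frieze–Teng integer programming formulation of \textsc{Exact Partition}. The inequalities $0\le x_i\le 1$ are called box constraints, and the two remaining inequalities (K1) $\sum(M+s_i)x_i\le \frac12 S+mM+\epsilon$ and (K2) $\sum(M+d_i)x_i\le \frac12\sum d_i+mM+\epsilon$ are the knapsack constraints. A vertex is degenerate if more than $2m$ of the defining inequalities are active at it; the polytope is simple (non-degenerate) if it has no degenerate vertex. *)

theory Defs
  imports "HOL-Analysis.Analysis"
begin

text \<open>Instance of Exact Partition: m and sizes s 0, ..., s (2m-1) (0-based indexing).
  Points of R^(2m) are extensional functions on {..<2*m}.\<close>

definition smax :: "nat \<Rightarrow> (nat \<Rightarrow> nat) \<Rightarrow> nat" where
  "smax m s = Max (s ` {..<2*m})"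

definition SS :: "nat \<Rightarrow> (nat \<Rightarrow> nat) \<Rightarrow> real" where
  "SS m s = (\<Sum>i<2*m. real (s i))"

definition MM :: "nat \<Rightarrow> (nat \<Rightarrow> nat) \<Rightarrow> real" where
  "MM m s = SS m s + 1"

definition dd :: "nat \<Rightarrow> (nat \<Rightarrow> nat) \<Rightarrow> nat \<Rightarrow> real" where
  "dd m s i = real (smax m s) - real (s i)"

definition eps :: "nat \<Rightarrow> (nat \<Rightarrow> nat) \<Rightarrow> real" where
  "eps m s = 1 / (2 * MM m s)"

definition K1_lhs where
  "K1_lhs m s x = (\<Sum>i<2*m. (MM m s + real (s i)) * x i)"
definition K1_rhs where
  "K1_rhs m s = SS m s / 2 + real m * MM m s + eps m s"
definition K2_lhs where
  "K2_lhs m s x = (\<Sum>i<2*m. (MM m s + dd m s i) * x i)"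
definition K2_rhs where
  "K2_rhs m s = (\<Sum>i<2*m. dd m s i) / 2 + real m * MM m s + eps m s"

definition P_R :: "nat \<Rightarrow> (nat \<Rightarrow> nat) \<Rightarrow> (nat \<Rightarrow> real) set" where
  "P_R m s = {x \<in> {..<2*m} \<rightarrow>\<^sub>E (UNIV :: real set).
      (\<forall>i<2*m. 0 \<le> x i \<and> x i \<le> 1) \<and>
      K1_lhs m s x \<le> K1_rhs m s \<and> K2_lhs m s x \<le> K2_rhs m s}"

definition is_vertex :: "nat \<Rightarrow> (nat \<Rightarrow> real) set \<Rightarrow> (nat \<Rightarrow> real) \<Rightarrow> bool" where
  "is_vertex m P x \<longleftrightarrow> x \<in> P \<and>
     \<not> (\<exists>y\<in>P. \<exists>z\<in>P. y \<noteq> z \<and> (\<exists>t::real. 0 < t \<and> t < 1 \<and>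
            (\<forall>i<2*m. x i = t * y i + (1 - t) * z i)))"

definition num_active :: "nat \<Rightarrow> (nat \<Rightarrow> nat) \<Rightarrow> (nat \<Rightarrow> real) \<Rightarrow> nat" where
  "num_active m s x =
     card {i. i < 2*m \<and> x i = 0} + card {i. i < 2*m \<and> x i = 1}
     + (if K1_lhs m s x = K1_rhs m s then 1 else 0)
     + (if K2_lhs m s x = K2_rhs m s then 1 else 0)"

definition simple_polytope_PR :: "nat \<Rightarrow> (nat \<Rightarrow> nat) \<Rightarrow> bool" where
  "simple_polytope_PR m s \<longleftrightarrow> (\<forall>x. is_vertex m (P_R m s) x \<longrightarrow> num_active m s x = 2*m)"

end

theory Submission
  imports Defs
begin

text \<open>
  At a point x of P_R in the box, let F be the set of fractional coordinates and k the number
  of tight knapsack constraints; then 2m - |F| + k inequalities are active, so simplicity means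
  |F| = k at every vertex.

  If |F| > k, the tight knapsack constraints form an underdetermined homogeneous linear system
  in the coordinates of F. A nonzero solution d moves x along a segment x \<plusminus> t d inside P_R, so
  x is not a vertex.

  Conversely k \<le> |F| holds everywhere, by integrality: after doubling, each knapsack constraint
  has integer coefficients and a right-hand side equal to an integer plus 1/M. For a 0/1 point
  neither constraint can be tight. If x has one fractional coordinate x_j and both constraints
  were tight, subtracting them makes 2 q x_j integral, where q = 2 s_j - s_max. Substituting
  back, q/M would be integral, which is impossible since 0 < |q| < M.
\<close>

lemma underdetermined_system_has_nonzero_solution:
  fixes F :: "'a set" and cs :: "('a \<Rightarrow> real) list"
  assumes "finite F" "length cs < card F"
  shows "\<exists>d. (\<forall>i. d i \<noteq> 0 \<longrightarrow> i \<in> F) \<and> (\<exists>j. d j \<noteq> 0) \<and>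
             (\<forall>c\<in>set cs. (\<Sum>i\<in>F. c i * d i) = 0)"
  using assms
proof (induction "length cs" arbitrary: cs F)
  case 0
  then obtain j where "j \<in> F" by fastforce
  then show ?case using 0 by (intro exI[of _ "\<lambda>i. if i = j then 1 else 0"]) auto
next
  case (Suc n)
  then obtain c cs' where cs: "cs = c # cs'" by (cases cs) auto
  show ?case
  proof (cases "\<forall>i\<in>F. c i = 0")
    case True
    with Suc.hyps(1)[of cs' F] Suc.prems Suc.hyps(2) show ?thesis by (auto simp: cs)
  next
    case False
    then obtain j where j: "j \<in> F" "c j \<noteq> 0" by auto
    define F' where "F' = F - {j}"
    \<comment> \<open>Gaussian elimination: solve the equation c for coordinate j and substitute.\<close>
    define elim where "elim c' i = c' i - c' j / c j * c i" for c' :: "'a \<Rightarrow> real" and i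
    have "n = length (map elim cs')" "finite F'" "length (map elim cs') < card F'"
      using Suc j by (auto simp: F'_def cs)
    from Suc.hyps(1)[OF this] obtain d' j' where supp': "\<forall>i. d' i \<noteq> 0 \<longrightarrow> i \<in> F'"
      and "d' j' \<noteq> 0" and sol': "\<forall>c'\<in>set cs'. (\<Sum>i\<in>F'. elim c' i * d' i) = 0"
      by auto
    define d where "d = d'(j := - (\<Sum>i\<in>F'. c i * d' i) / c j)"
    have split_sum: "(\<Sum>i\<in>F. c' i * d i) = c' j * d j + (\<Sum>i\<in>F'. c' i * d' i)" for c'
      using Suc.prems(1) j(1) by (simp add: F'_def d_def sum.remove)
    have "(\<Sum>i\<in>F. c' i * d i) = 0" if "c' \<in> set cs" for c'
    proof (cases "c' = c")
      case True
      then show ?thesis using j(2) unfolding split_sum by (simp add: d_def)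
    next
      case False
      then have "(\<Sum>i\<in>F'. elim c' i * d' i) = 0" using sol' that cs by simp
      then show ?thesis using j(2) unfolding split_sum
        by (simp add: d_def elim_def algebra_simps sum_subtractf sum_distrib_left sum_divide_distrib)
    qed
    moreover have "\<forall>i. d i \<noteq> 0 \<longrightarrow> i \<in> F" "d j' \<noteq> 0"
      using supp' j(1) \<open>d' j' \<noteq> 0\<close> by (auto simp: d_def F'_def)
    ultimately show ?thesis by blast
  qed
qed

lemma eventually_affine_le:
  fixes u v \<beta> :: real
  assumes "u \<le> \<beta>" and "u = \<beta> \<Longrightarrow> v = 0"
  shows "\<forall>\<^sub>F t in nhds 0. u + t * v \<le> \<beta>"
proof (cases "u = \<beta>")
  case True
  then show ?thesis using assms(2) by simp
next
  case False
  have "((\<lambda>t. u + t * v) \<longlongrightarrow> u + 0 * v) (nhds 0)"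
    by (intro tendsto_intros filterlim_ident)
  moreover have "u < \<beta>" using False assms(1) by simp
  ultimately have "\<forall>\<^sub>F t in nhds 0. u + t * v < \<beta>"
    by (simp add: order_tendstoD(2))
  then show ?thesis by eventually_elim simp
qed

lemma divide_not_Ints:
  fixes q M :: real
  assumes "q \<noteq> 0" and "\<bar>q\<bar> < M"
  shows "q / M \<notin> \<int>"
proof
  assume "q / M \<in> \<int>"
  then obtain n :: int where n: "q / M = of_int n" by (elim Ints_cases)
  have "M > 0" using assms by linarith
  then have "0 < \<bar>q / M\<bar>" "\<bar>q / M\<bar> < 1"
    using assms by (simp_all add: abs_divide)
  then have "0 < \<bar>n\<bar>" "\<bar>n\<bar> < 1"
    unfolding n by simp_all
  then show False by linarith
qed

definition fractional_coords :: "nat \<Rightarrow> (nat \<Rightarrow> real) \<Rightarrow> nat set" where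
  "fractional_coords m x = {i. i < 2*m \<and> 0 < x i \<and> x i < 1}"

definition K1_coeff :: "nat \<Rightarrow> (nat \<Rightarrow> nat) \<Rightarrow> nat \<Rightarrow> real" where
  "K1_coeff m s i = MM m s + real (s i)"

definition K2_coeff :: "nat \<Rightarrow> (nat \<Rightarrow> nat) \<Rightarrow> nat \<Rightarrow> real" where
  "K2_coeff m s i = MM m s + dd m s i"

text \<open>A list rather than a set, so that two tight constraints with equal coefficients count twice.\<close>
definition tight_knapsack_coeffs :: "nat \<Rightarrow> (nat \<Rightarrow> nat) \<Rightarrow> (nat \<Rightarrow> real) \<Rightarrow> (nat \<Rightarrow> real) list" where
  "tight_knapsack_coeffs m s x =
     (if K1_lhs m s x = K1_rhs m s then [K1_coeff m s] else []) @
     (if K2_lhs m s x = K2_rhs m s then [K2_coeff m s] else [])"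

lemma K1_lhs_eq: "K1_lhs m s x = (\<Sum>i<2*m. K1_coeff m s i * x i)"
  by (simp add: K1_lhs_def K1_coeff_def)

lemma K2_lhs_eq: "K2_lhs m s x = (\<Sum>i<2*m. K2_coeff m s i * x i)"
  by (simp add: K2_lhs_def K2_coeff_def)

lemma K1_lhs_affine: "K1_lhs m s (restrict (\<lambda>i. x i + t * d i) {..<2*m}) = K1_lhs m s x + t * K1_lhs m s d"
  by (simp add: K1_lhs_def sum.distrib sum_distrib_left algebra_simps)

lemma K2_lhs_affine: "K2_lhs m s (restrict (\<lambda>i. x i + t * d i) {..<2*m}) = K2_lhs m s x + t * K2_lhs m s d"
  by (simp add: K2_lhs_def sum.distrib sum_distrib_left algebra_simps)

lemma K1_coeff_in_tight_knapsack_coeffs: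
  "K1_lhs m s y = K1_rhs m s \<Longrightarrow> K1_coeff m s \<in> set (tight_knapsack_coeffs m s y)"
  by (simp add: tight_knapsack_coeffs_def)

lemma K2_coeff_in_tight_knapsack_coeffs:
  "K2_lhs m s y = K2_rhs m s \<Longrightarrow> K2_coeff m s \<in> set (tight_knapsack_coeffs m s y)"
  by (simp add: tight_knapsack_coeffs_def)

lemma num_active_add_card_fractional_coords:
  assumes "\<forall>i<2*m. 0 \<le> x i \<and> x i \<le> 1"
  shows "num_active m s x + card (fractional_coords m x) = 2*m + length (tight_knapsack_coeffs m s x)"
proof -
  let ?Z = "{i. i < 2*m \<and> x i = 0}" and ?O = "{i. i < 2*m \<and> x i = 1}"
  have "{..<2*m} = ?Z \<union> ?O \<union> fractional_coords m x"
    using assms by (force simp: fractional_coords_def)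
  moreover have "card (?Z \<union> ?O \<union> fractional_coords m x) =
      card ?Z + card ?O + card (fractional_coords m x)"
    by (subst card_Un_disjoint; (subst card_Un_disjoint)?) (auto simp: fractional_coords_def)
  ultimately have "card ?Z + card ?O + card (fractional_coords m x) = 2*m"
    by (metis card_lessThan)
  then show ?thesis
    by (simp add: num_active_def tight_knapsack_coeffs_def)
qed

lemma eventually_in_P_R_along_direction:
  assumes x: "x \<in> P_R m s"
    and supp: "\<forall>i. d i \<noteq> 0 \<longrightarrow> i \<in> fractional_coords m x"
    and kernel: "\<forall>c\<in>set (tight_knapsack_coeffs m s x). (\<Sum>i<2*m. c i * d i) = 0"
  shows "\<forall>\<^sub>F t in nhds 0. restrict (\<lambda>i. x i + t * d i) {..<2*m} \<in> P_R m s"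
proof -
  have box: "\<forall>i<2*m. 0 \<le> x i \<and> x i \<le> 1"
    and K1: "K1_lhs m s x \<le> K1_rhs m s" and K2: "K2_lhs m s x \<le> K2_rhs m s"
    using x by (auto simp: P_R_def)
  have "\<forall>\<^sub>F t in nhds 0. 0 \<le> x i + t * d i \<and> x i + t * d i \<le> 1" if "i < 2*m" for i
  proof -
    have "x i = 0 \<Longrightarrow> d i = 0" "x i = 1 \<Longrightarrow> d i = 0"
      using supp by (auto simp: fractional_coords_def)
    then have "\<forall>\<^sub>F t in nhds 0. - x i + t * - d i \<le> 0" "\<forall>\<^sub>F t in nhds 0. x i + t * d i \<le> 1"
      using box that by (intro eventually_affine_le; force)+
    then show ?thesis by eventually_elim simp
  qed
  then have "\<forall>\<^sub>F t in nhds 0. \<forall>i\<in>{..<2*m}. 0 \<le> x i + t * d i \<and> x i + t * d i \<le> 1"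
    by (simp add: eventually_ball_finite)
  moreover have "\<forall>\<^sub>F t in nhds 0. K1_lhs m s x + t * K1_lhs m s d \<le> K1_rhs m s"
    using K1 kernel K1_coeff_in_tight_knapsack_coeffs[of m s x]
    by (intro eventually_affine_le) (auto simp: K1_lhs_eq)
  moreover have "\<forall>\<^sub>F t in nhds 0. K2_lhs m s x + t * K2_lhs m s d \<le> K2_rhs m s"
    using K2 kernel K2_coeff_in_tight_knapsack_coeffs[of m s x]
    by (intro eventually_affine_le) (auto simp: K2_lhs_eq)
  ultimately show ?thesis
    by eventually_elim (simp add: P_R_def K1_lhs_affine K2_lhs_affine)
qed

lemma not_vertex_if_feasible_direction:
  assumes x: "x \<in> P_R m s"
    and supp: "\<forall>i. d i \<noteq> 0 \<longrightarrow> i \<in> fractional_coords m x"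
    and "d j \<noteq> 0"
    and kernel: "\<forall>c\<in>set (tight_knapsack_coeffs m s x). (\<Sum>i<2*m. c i * d i) = 0"
  shows "\<not> is_vertex m (P_R m s) x"
proof
  assume vertex: "is_vertex m (P_R m s) x"
  define y where "y t = restrict (\<lambda>i. x i + t * d i) {..<2*m}" for t
  obtain \<delta> :: real where "\<delta> > 0" and feasible: "\<And>t. \<bar>t\<bar> < \<delta> \<Longrightarrow> y t \<in> P_R m s"
    using eventually_in_P_R_along_direction[OF assms(1,2,4)]
    unfolding eventually_nhds_metric dist_real_def y_def by auto
  define t where "t = \<delta> / 2"
  have "y t \<in> P_R m s" "y (- t) \<in> P_R m s"
    using \<open>\<delta> > 0\<close> by (auto intro: feasible simp: t_def)
  moreover have "y t \<noteq> y (- t)"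
  proof
    assume "y t = y (- t)"
    then have "y t j = y (- t) j" by simp
    moreover have "j < 2*m" using supp \<open>d j \<noteq> 0\<close> by (auto simp: fractional_coords_def)
    ultimately show False using \<open>d j \<noteq> 0\<close> \<open>\<delta> > 0\<close> by (simp add: y_def t_def)
  qed
  moreover have "\<forall>i<2*m. x i = 1/2 * y t i + (1 - 1/2) * y (- t) i"
    by (simp add: y_def algebra_simps)
  ultimately have "\<exists>y\<in>P_R m s. \<exists>z\<in>P_R m s. y \<noteq> z \<and>
      (\<exists>t::real. 0 < t \<and> t < 1 \<and> (\<forall>i<2*m. x i = t * y i + (1 - t) * z i))"
    by (intro bexI[of _ "y t"] bexI[of _ "y (- t)"] conjI exI[of _ "1/2"]) auto
  then show False using vertex unfolding is_vertex_def by blast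
qed

lemma card_fractional_coords_le_tight_at_vertex:
  assumes vertex: "is_vertex m (P_R m s) x"
  shows "card (fractional_coords m x) \<le> length (tight_knapsack_coeffs m s x)"
proof (rule ccontr)
  let ?F = "fractional_coords m x"
  assume "\<not> ?thesis"
  moreover have F: "finite ?F" "?F \<subseteq> {..<2*m}" by (auto simp: fractional_coords_def)
  ultimately obtain d j where supp: "\<forall>i. d i \<noteq> 0 \<longrightarrow> i \<in> ?F" and "d j \<noteq> 0"
    and kernel_F: "\<forall>c\<in>set (tight_knapsack_coeffs m s x). (\<Sum>i\<in>?F. c i * d i) = 0"
    using underdetermined_system_has_nonzero_solution[of ?F "tight_knapsack_coeffs m s x"]
    by (metis not_le)
  have "(\<Sum>i<2*m. c i * d i) = (\<Sum>i\<in>?F. c i * d i)" for c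
    using F supp by (intro sum.mono_neutral_right) auto
  then have "\<forall>c\<in>set (tight_knapsack_coeffs m s x). (\<Sum>i<2*m. c i * d i) = 0"
    using kernel_F by simp
  moreover have "x \<in> P_R m s" using vertex by (simp add: is_vertex_def)
  ultimately show False
    using not_vertex_if_feasible_direction[OF _ supp \<open>d j \<noteq> 0\<close>] vertex by blast
qed

lemma s_le_smax: "i < 2*m \<Longrightarrow> s i \<le> smax m s"
  by (simp add: smax_def)

lemma smax_le_SS:
  assumes "m \<ge> 1"
  shows "real (smax m s) \<le> SS m s"
proof -
  have "s ` {..<2*m} \<noteq> {}" using assms by (simp add: lessThan_empty_iff)
  then have "smax m s \<in> s ` {..<2*m}"
    unfolding smax_def by (intro Max_in) auto
  then obtain i where "i < 2*m" "smax m s = s i" by auto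
  then show ?thesis
    unfolding SS_def by (auto intro: member_le_sum)
qed

lemma MM_gt_1:
  assumes "m \<ge> 1" and "\<forall>i<2*m. s i > 0"
  shows "MM m s > 1"
proof -
  have "real (s 0) \<le> SS m s"
    using assms(1) unfolding SS_def by (intro member_le_sum) auto
  moreover have "s 0 > 0" using assms by simp
  ultimately show ?thesis by (simp add: MM_def)
qed

lemma SS_Ints: "SS m s \<in> \<int>"
  unfolding SS_def by (intro Ints_sum) auto

lemma sum_dd_Ints: "(\<Sum>i<2*m. dd m s i) \<in> \<int>"
  unfolding dd_def by (intro Ints_sum) auto

lemma MM_Ints: "MM m s \<in> \<int>"
  by (simp add: MM_def SS_Ints)

lemma K1_coeff_Ints: "K1_coeff m s i \<in> \<int>"
  by (simp add: K1_coeff_def MM_Ints)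

lemma K2_coeff_Ints: "K2_coeff m s i \<in> \<int>"
  by (simp add: K2_coeff_def MM_Ints dd_def)

lemma two_K1_rhs: "2 * K1_rhs m s = SS m s + 2 * real m * MM m s + 1 / MM m s"
  by (simp add: K1_rhs_def eps_def algebra_simps)

lemma two_K2_rhs: "2 * K2_rhs m s = (\<Sum>i<2*m. dd m s i) + 2 * real m * MM m s + 1 / MM m s"
  by (simp add: K2_rhs_def eps_def algebra_simps)

lemma Ints_if_not_fractional_coord:
  assumes "0 \<le> x i" "x i \<le> 1" "i < 2*m" "i \<notin> fractional_coords m x"
  shows "x i \<in> \<int>"
proof -
  have "x i = 0 \<or> x i = 1" using assms by (auto simp: fractional_coords_def)
  then show ?thesis by auto
qed

lemma knapsacks_not_tight_if_integral:
  assumes "MM m s > 1" and "\<forall>i<2*m. x i \<in> \<int>"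
  shows "K1_lhs m s x \<noteq> K1_rhs m s" and "K2_lhs m s x \<noteq> K2_rhs m s"
proof -
  have lhs_Ints: "K1_lhs m s x \<in> \<int>" "K2_lhs m s x \<in> \<int>"
    unfolding K1_lhs_eq K2_lhs_eq using assms(2)
    by (auto intro!: Ints_sum Ints_mult K1_coeff_Ints K2_coeff_Ints)
  have "1 / MM m s \<notin> \<int>" using divide_not_Ints[of 1] assms(1) by simp
  moreover have "1 / MM m s = 2 * K1_lhs m s x - SS m s - 2 * real m * MM m s"
    if "K1_lhs m s x = K1_rhs m s"
    using that two_K1_rhs[of m s] by linarith
  moreover have "1 / MM m s = 2 * K2_lhs m s x - (\<Sum>i<2*m. dd m s i) - 2 * real m * MM m s"
    if "K2_lhs m s x = K2_rhs m s"
    using that two_K2_rhs[of m s] by linarith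
  moreover have "2 * K1_lhs m s x - SS m s - 2 * real m * MM m s \<in> \<int>"
    "2 * K2_lhs m s x - (\<Sum>i<2*m. dd m s i) - 2 * real m * MM m s \<in> \<int>"
    using lhs_Ints SS_Ints sum_dd_Ints MM_Ints by (auto intro!: Ints_diff Ints_mult)
  ultimately show "K1_lhs m s x \<noteq> K1_rhs m s" and "K2_lhs m s x \<noteq> K2_rhs m s"
    by metis+
qed

lemma knapsacks_not_both_tight_if_one_fractional:
  assumes "m \<ge> 1" and "\<forall>i<2*m. s i > 0" and "\<not> (\<exists>i<2*m. real (s i) = real (smax m s) / 2)"
    and box: "\<forall>i<2*m. 0 \<le> x i \<and> x i \<le> 1" and F: "fractional_coords m x = {j}"
    and T1: "K1_lhs m s x = K1_rhs m s" and T2: "K2_lhs m s x = K2_rhs m s"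
  shows False
proof -
  let ?a = "K1_coeff m s" and ?b = "K2_coeff m s" and ?M = "MM m s"
  have j: "j < 2*m" using F by (auto simp: fractional_coords_def)
  have x_Ints: "x i \<in> \<int>" if "i \<in> {..<2*m} - {j}" for i
    using that box F by (intro Ints_if_not_fractional_coord) auto
  define R1 where "R1 = (\<Sum>i\<in>{..<2*m} - {j}. ?a i * x i)"
  define R2 where "R2 = (\<Sum>i\<in>{..<2*m} - {j}. ?b i * x i)"
  have R_Ints: "R1 \<in> \<int>" "R2 \<in> \<int>"
    unfolding R1_def R2_def using x_Ints
    by (auto intro!: Ints_sum Ints_mult K1_coeff_Ints K2_coeff_Ints)
  have K1: "K1_lhs m s x = ?a j * x j + R1" and K2: "K2_lhs m s x = ?b j * x j + R2"
    using j by (simp_all add: K1_lhs_eq K2_lhs_eq R1_def R2_def sum.remove)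
  define q where "q = ?a j - ?b j"
  have q_eq: "q = 2 * real (s j) - real (smax m s)"
    by (simp add: q_def K1_coeff_def K2_coeff_def dd_def)
  have "q \<noteq> 0" using assms(3) j by (auto simp: q_eq)
  moreover have "\<bar>q\<bar> < ?M"
  proof -
    have "real (s j) \<le> real (smax m s)" using s_le_smax[OF j] by simp
    then show ?thesis using smax_le_SS[OF assms(1), of s] by (auto simp: q_eq MM_def)
  qed
  moreover have "q / ?M \<in> \<int>"
  proof -
    define p where "p = 2 * q * x j"
    have "p = SS m s - (\<Sum>i<2*m. dd m s i) - 2 * R1 + 2 * R2"
      using T1 T2 two_K1_rhs[of m s] two_K2_rhs[of m s]
      unfolding p_def q_def K1 K2 by (simp add: algebra_simps)
    then have "p \<in> \<int>" using SS_Ints sum_dd_Ints R_Ints by simp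
    have "q / ?M = q * (2 * K1_lhs m s x) - q * SS m s - 2 * q * real m * ?M"
      using T1 two_K1_rhs[of m s] by (simp add: algebra_simps)
    also have "\<dots> = ?a j * p + 2 * q * R1 - q * SS m s - 2 * q * real m * ?M"
      unfolding K1 p_def by (simp add: algebra_simps)
    also have "\<dots> \<in> \<int>"
      using \<open>p \<in> \<int>\<close> R_Ints SS_Ints MM_Ints K1_coeff_Ints K2_coeff_Ints
      by (auto simp: q_def intro!: Ints_add Ints_diff Ints_mult)
    finally show ?thesis .
  qed
  ultimately show False using divide_not_Ints by blast
qed

lemma length_tight_knapsack_coeffs_le_card_fractional_coords:
  assumes "m \<ge> 1" and "\<forall>i<2*m. s i > 0" and "\<not> (\<exists>i<2*m. real (s i) = real (smax m s) / 2)"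
    and "x \<in> P_R m s"
  shows "length (tight_knapsack_coeffs m s x) \<le> card (fractional_coords m x)"
proof -
  have box: "\<forall>i<2*m. 0 \<le> x i \<and> x i \<le> 1" using assms(4) by (simp add: P_R_def)
  have "finite (fractional_coords m x)" by (simp add: fractional_coords_def)
  then consider "fractional_coords m x = {}" | j where "fractional_coords m x = {j}"
    | "card (fractional_coords m x) \<ge> 2"
    by (metis One_nat_def card_1_singletonE card_eq_0_iff less_2_cases not_less)
  then show ?thesis
  proof cases
    case 1
    then have "\<forall>i<2*m. x i \<in> \<int>" using box by (auto intro: Ints_if_not_fractional_coord)
    then show ?thesis
      using knapsacks_not_tight_if_integral MM_gt_1[OF assms(1,2)]
      by (simp add: tight_knapsack_coeffs_def)
  next
    case (2 j)
    then show ?thesis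
      using knapsacks_not_both_tight_if_one_fractional[OF assms(1-3) box]
      by (auto simp: tight_knapsack_coeffs_def)
  next
    case 3
    then show ?thesis by (simp add: tight_knapsack_coeffs_def)
  qed
qed

theorem lemma1:
  fixes m :: nat and s :: "nat \<Rightarrow> nat"
  assumes "m \<ge> 1"
    and "\<forall>i<2*m. s i > 0"
    and "\<not> (\<exists>i<2*m. real (s i) = real (smax m s) / 2)"
  shows "simple_polytope_PR m s"
  unfolding simple_polytope_PR_def
proof (intro allI impI)
  fix x
  assume vertex: "is_vertex m (P_R m s) x"
  then have x: "x \<in> P_R m s" by (simp add: is_vertex_def)
  then have box: "\<forall>i<2*m. 0 \<le> x i \<and> x i \<le> 1" by (simp add: P_R_def)
  have "card (fractional_coords m x) = length (tight_knapsack_coeffs m s x)"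
    using card_fractional_coords_le_tight_at_vertex[OF vertex]
      length_tight_knapsack_coeffs_le_card_fractional_coords[OF assms x]
    by linarith
  then show "num_active m s x = 2*m"
    using num_active_add_card_fractional_coords[OF box, of s] by linarith
qed

end
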